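(* Let $Y$ be a sofic shift, $d$ a metric for the topology of $X_{\mathbb K(Y)}$, $x \in X_{\mathbb K(Y)}$ and $N\in \mathbb Z$. There is a periodic point $p \in Y$ and an element $x' \in X_{\mathbb K(Y)}$ such that $x'_i = x_i$ for all $i \geq N$ and $\lim_{i \to -\infty} d(\sigma^i(x'),\sigma^i(\alpha_Y(p))) = 0$. In particular, $x' \in \mathcal R(L_{\mathbb K(Y)})$.
   Context: For a sofic shift $Y\subseteq A^{\mathbb Z}$ and $y\in Y$, $F(y)=\{w\in Y[0,\infty): y_{(-\infty,-1]}w\in Y\}$, where $Y[0,\infty)=\{y_{[0,\infty)}:y\in Y\}$. The future cover $(\mathbb K(Y),L_{\mathbb K(Y)})$ is the labeled graph with vertices the distinct sets $F(y)$, $y\in Y$, and an edge labeled $a\in A$ from $F(y)$ to $F(z)$ exactly when $F(z)=\{w\in A^{\mathbb N}: aw\in F(y)\}$ (one edge per such pair and label); $X_{\mathbb K(Y)}$ is its edge shift with shift map $\sigma$, and $L_{\mathbb K(Y)}$ reads labels coordinatewise. $\alpha_Y:Y\to X_{\mathbb K(Y)}$ is the map such that, for each $i$, the $i$-th edge of $\alpha_Y(y)$ has source $F(\sigma^i(y))$ and label $y_i$ (so $L_{\mathbb K(Y)}(\alpha_Y(y))=y$). For $x\in X_{\mathbb K(Y)}$, $\mathbb U(x)=\{z:\exists N\ \forall i\le N,\ z_i=x_i\}$ (similarly in $Y$); $x$ is a regular ray if $L_{\mathbb K(Y)}$ maps $\mathbb U(x)$ onto $\mathbb U(L_{\mathbb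 K(Y)}(x))$, and $\mathcal R(L_{\mathbb K(Y)})$ is the set of regular rays. *)

theory Defs
  imports "HOL-Analysis.Analysis"
begin

text \<open>Points of A^Z are functions int => 'a, with the finite alphabet A = UNIV :: 'a set
  ('a :: finite).  One-sided sequences in A^N are functions nat => 'a.\<close>

definition sofic :: "(int \<Rightarrow> 'a::finite) set \<Rightarrow> bool" where
  "sofic Y \<longleftrightarrow> (\<exists>(E :: nat set) (src :: nat \<Rightarrow> nat) (tgt :: nat \<Rightarrow> nat) (lab :: nat \<Rightarrow> 'a).
      finite E \<and>
      Y = {(\<lambda>i. lab (p i)) | p. \<forall>i. p i \<in> E \<and> tgt (p i) = src (p (i + 1))})"

definition shiftz :: "int \<Rightarrow> (int \<Rightarrow> 'b) \<Rightarrow> (int \<Rightarrow> 'b)" where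
  "shiftz i x = (\<lambda>k. x (k + i))"

definition right_ray :: "(int \<Rightarrow> 'a) set \<Rightarrow> (nat \<Rightarrow> 'a) set" where
  "right_ray Y = {(\<lambda>n. y (int n)) | y. y \<in> Y}"

definition glue :: "(int \<Rightarrow> 'a) \<Rightarrow> (nat \<Rightarrow> 'a) \<Rightarrow> (int \<Rightarrow> 'a)" where
  "glue y w = (\<lambda>k. if k < 0 then y k else w (nat k))"

definition future :: "(int \<Rightarrow> 'a) set \<Rightarrow> (int \<Rightarrow> 'a) \<Rightarrow> (nat \<Rightarrow> 'a) set" where
  "future Y y = {w \<in> right_ray Y. glue y w \<in> Y}"

definition pcons :: "'a \<Rightarrow> (nat \<Rightarrow> 'a) \<Rightarrow> (nat \<Rightarrow> 'a)" where
  "pcons a w = (\<lambda>n. if n = 0 then a else w (n - 1))"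

type_synonym 'a fvertex = "(nat \<Rightarrow> 'a) set"
text \<open>An edge of the future cover: (source, label, target).\<close>
type_synonym 'a fedge = "'a fvertex \<times> 'a \<times> 'a fvertex"

definition fc_vertices :: "(int \<Rightarrow> 'a) set \<Rightarrow> 'a fvertex set" where
  "fc_vertices Y = future Y ` Y"

definition fc_edges :: "(int \<Rightarrow> 'a) set \<Rightarrow> 'a fedge set" where
  "fc_edges Y = {(F, a, F') | F a F'. F \<in> fc_vertices Y \<and> F' \<in> fc_vertices Y \<and>
                                       F' = {w. pcons a w \<in> F}}"

definition esrc :: "'a fedge \<Rightarrow> 'a fvertex" where "esrc e = fst e"
definition elabel :: "'a fedge \<Rightarrow> 'a" where "elabel e = fst (snd e)"
definition etgt :: "'a fedge \<Rightarrow> 'a fvertex" where "etgt e = snd (snd e)"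

definition fc_shift :: "(int \<Rightarrow> 'a) set \<Rightarrow> (int \<Rightarrow> 'a fedge) set" where
  "fc_shift Y = {x. \<forall>i. x i \<in> fc_edges Y \<and> etgt (x i) = esrc (x (i + 1))}"

definition fc_label :: "(int \<Rightarrow> 'a fedge) \<Rightarrow> (int \<Rightarrow> 'a)" where
  "fc_label x = (\<lambda>i. elabel (x i))"

definition alpha :: "(int \<Rightarrow> 'a) set \<Rightarrow> (int \<Rightarrow> 'a) \<Rightarrow> (int \<Rightarrow> 'a fedge)" where
  "alpha Y y = (\<lambda>i. (future Y (shiftz i y), y i, {w. pcons (y i) w \<in> future Y (shiftz i y)}))"

definition left_class :: "(int \<Rightarrow> 'b) set \<Rightarrow> (int \<Rightarrow> 'b) \<Rightarrow> (int \<Rightarrow> 'b) set" where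
  "left_class S x = {z \<in> S. \<exists>N. \<forall>i\<le>N. z i = x i}"

definition regular_rays :: "(int \<Rightarrow> 'a) set \<Rightarrow> (int \<Rightarrow> 'a fedge) set" where
  "regular_rays Y = {x \<in> fc_shift Y.
      fc_label ` left_class (fc_shift Y) x = left_class Y (fc_label x)}"

definition periodic_pt :: "(int \<Rightarrow> 'a) \<Rightarrow> bool" where
  "periodic_pt p \<longleftrightarrow> (\<exists>n>0. \<forall>k. p (k + n) = p k)"

definition edge_prod_topology :: "(int \<Rightarrow> 'b) topology" where
  "edge_prod_topology = product_topology (\<lambda>_. discrete_topology UNIV) UNIV"

end

(*
  The future of a point of Y at a coordinate is determined by a finite window of its past,
  whose length depends on the point: the sets of vertices at which paths reading longer and
  longer windows can arrive decrease and hence stabilise, and Y is closed because the space of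
  paths of the presenting graph is compact.

  Realise the source of x_N as the future at N of some y in Y. Pigeonhole on the pairs
  (future, presenting edge) along y gives a loop c < a <= N whose length a - c exceeds the
  window at a and along which the future does not change. Winding around the loop yields a
  periodic point p in Y that agrees with y on [c, a). Its future at a is contained in that of y
  by the choice of the window, and contains it because prepending the loop word preserves the
  future of y at a. So alpha(p) left of a, alpha(y) on [a, N) and x from N on form a point x'
  of the future cover. It coincides with the periodic point alpha(p) on a left half-line: this
  gives the metric convergence, since balls of a metric inducing the product topology contain
  cylinders and only finitely many shifts of alpha(p) occur, and regularity, since labels of
  points of the future cover lie in Y and points of Y left-asymptotic to p lift through alpha.
*)

theory Submission
  imports Defs
begin

lemma shiftz_shiftz [simp]: "shiftz i (shiftz j y) = shiftz (i + j) y"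
  by (auto simp: shiftz_def algebra_simps)

lemma shiftz_0 [simp]: "shiftz 0 y = y"
  by (simp add: shiftz_def)

lemma shiftz_mod_period:
  assumes "shiftz P q = q"
  shows "shiftz i q = shiftz (i mod P) q"
proof -
  have multiple: "shiftz (P * n) q = q" for n
  proof (induction n rule: int_induct[where k = 0])
    case (step1 n)
    have "shiftz (P * (n + 1)) q = shiftz (P * n) (shiftz P q)"
      by (simp add: algebra_simps)
    then show ?case using step1 assms by simp
  next
    case (step2 n)
    have "shiftz (P * (n - 1)) q = shiftz (P * (n - 1)) (shiftz P q)"
      using assms by simp
    then show ?case using step2 by (simp add: algebra_simps)
  qed simp
  have "shiftz i q = shiftz (i mod P) (shiftz (P * (i div P)) q)"
    by (simp add: algebra_simps)
  then show ?thesis using multiple by simp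
qed

lemma periodic_mod:
  assumes "shiftz P q = q"
  shows "q i = q (i mod P)"
  using fun_cong[OF shiftz_mod_period[OF assms, of i], of 0] by (simp add: shiftz_def)

lemma future_iff_glue: "future Y y = {w. glue y w \<in> Y}"
proof -
  have "w \<in> right_ray Y" if "glue y w \<in> Y" for w
  proof -
    have "w = (\<lambda>n. glue y w (int n))" by (auto simp: glue_def)
    then show ?thesis using that unfolding right_ray_def by blast
  qed
  then show ?thesis unfolding future_def by blast
qed

definition prepend :: "(int \<Rightarrow> 'b) \<Rightarrow> int \<Rightarrow> nat \<Rightarrow> (nat \<Rightarrow> 'b) \<Rightarrow> (nat \<Rightarrow> 'b)" where
  "prepend l j n s = (\<lambda>k. if k < n then l (j + int k) else s (k - n))"

lemma glue_prepend:
  "glue (shiftz j y) (prepend y j n s) = shiftz (- int n) (glue (shiftz (j + int n) y) s)"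
  by (auto simp: glue_def prepend_def shiftz_def fun_eq_iff algebra_simps nat_diff_distrib)

lemma funpow_prepend:
  assumes "n > 0"
  shows "(prepend l j n ^^ k) s m = (if m < k * n then l (j + int (m mod n)) else s (m - k * n))"
proof (induction k arbitrary: m)
  case (Suc k)
  show ?case
  proof (cases "m < n")
    case False
    then have "m mod n = (m - n) mod n" by (simp add: le_mod_geq)
    with False Suc show ?thesis by (auto simp: prepend_def)
  qed (simp add: prepend_def)
qed simp

lemma shiftz_glue_funpow_prepend:
  assumes "n > 0" and period: "shiftz (int n) q = q" and "- int (m * n) \<le> k"
  shows "shiftz (int (m * n)) (glue t ((prepend q 0 n ^^ m) s)) k = glue q s k"
proof (cases "k < 0")
  case True
  with assms(3) have k: "0 \<le> k + int (m * n)" "nat (k + int (m * n)) < m * n"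
    by linarith+
  have "int (nat (k + int (m * n)) mod n) = (k + int m * int n) mod int n"
    using k(1) by (simp add: zmod_int)
  also have "\<dots> = k mod int n" by simp
  finally show ?thesis
    using k True periodic_mod[OF period, of k]
    by (simp add: shiftz_def glue_def funpow_prepend[OF \<open>n > 0\<close>])
next
  case False
  have "0 \<le> int m * int n" by simp
  with False have "nat (k + int (m * n)) = nat k + m * n" and "\<not> k + int m * int n < 0"
    by (simp add: nat_add_distrib nat_mult_distrib, linarith)
  with False show ?thesis
    by (simp add: shiftz_def glue_def funpow_prepend[OF \<open>n > 0\<close>])
qed

definition periodize :: "(int \<Rightarrow> 'b) \<Rightarrow> int \<Rightarrow> int \<Rightarrow> (int \<Rightarrow> 'b)" where
  "periodize y c a = (\<lambda>k. y (c + (k - c) mod (a - c)))"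

lemma periodize_eq: "c \<le> k \<Longrightarrow> k < a \<Longrightarrow> periodize y c a k = y k"
  by (simp add: periodize_def mod_pos_pos_trivial)

lemma shiftz_periodize: "shiftz (a - c) (periodize y c a) = periodize y c a"
proof -
  have "(k + (a - c) - c) mod (a - c) = (k - c) mod (a - c)" for k
    using mod_add_self2[of "k - c" "a - c"] by (simp add: algebra_simps)
  then show ?thesis
    by (simp add: periodize_def shiftz_def)
qed

lemma decseq_finite_range_has_least:
  fixes g :: "nat \<Rightarrow> 'b set"
  assumes "finite (range g)" and "decseq g"
  obtains m0 where "\<And>m. g m0 \<subseteq> g m"
proof -
  obtain a0 where "infinite {a. g a = g a0}"
    using pigeonhole_infinite[of "UNIV :: nat set" g] assms(1) by auto
  then have "\<exists>m'\<ge>m. g m' = g a0" for m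
    unfolding infinite_nat_iff_unbounded_le by auto
  then have "g a0 \<subseteq> g m" for m
    using assms(2) unfolding decseq_def by metis
  then show thesis using that by blast
qed

lemma int_pigeonhole_far_below:
  fixes f :: "int \<Rightarrow> 'b"
  assumes "finite (f ` {..N})"
  obtains a where "a \<le> N" and "\<forall>m. \<exists>c. c < a - m \<and> f c = f a"
proof -
  obtain a where a: "a \<le> N" and fiber: "infinite {j \<in> {..N}. f j = f a}"
    using pigeonhole_infinite[OF infinite_Iic assms] by auto
  have "\<exists>c. c < a - m \<and> f c = f a" for m
  proof (rule ccontr)
    assume "\<nexists>c. c < a - m \<and> f c = f a"
    then have "{j \<in> {..N}. f j = f a} \<subseteq> {a - m..N}" by force
    with fiber show False using finite_subset by blast
  qed
  with a show thesis using that by blast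
qed

lemma alpha_shiftz: "alpha Y (shiftz i y) = shiftz i (alpha Y y)"
  by (simp add: alpha_def fun_eq_iff) (simp add: shiftz_def)

lemma esrc_alpha [simp]: "esrc (alpha Y y j) = future Y (shiftz j y)"
  and elabel_alpha [simp]: "elabel (alpha Y y j) = y j"
  by (simp_all add: alpha_def esrc_def elabel_def)

lemma fc_label_alpha [simp]: "fc_label (alpha Y y) = y"
  by (simp add: fc_label_def)

lemma fc_shift_shiftz: "z \<in> fc_shift Y \<Longrightarrow> shiftz i z \<in> fc_shift Y"
  unfolding fc_shift_def shiftz_def by (simp add: algebra_simps)

lemma fc_vertex_nonempty:
  assumes "F \<in> fc_vertices Y"
  obtains s where "s \<in> F"
proof -
  obtain y where "y \<in> Y" and "F = future Y y"
    using assms unfolding fc_vertices_def by auto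
  moreover have "glue y (\<lambda>n. y (int n)) = y"
    by (auto simp: glue_def)
  ultimately show thesis
    using that unfolding future_iff_glue by (metis mem_Collect_eq)
qed

lemma esrc_in_fc_vertices: "e \<in> fc_edges Y \<Longrightarrow> esrc e \<in> fc_vertices Y"
  by (auto simp: fc_edges_def esrc_def)

lemma etgt_fc_edge: "e \<in> fc_edges Y \<Longrightarrow> etgt e = {w. pcons (elabel e) w \<in> esrc e}"
  by (auto simp: fc_edges_def etgt_def elabel_def esrc_def)

lemma esrc_prepend:
  assumes "z \<in> fc_shift Y"
  shows "esrc (z (j + int n)) = {s. prepend (fc_label z) j n s \<in> esrc (z j)}"
proof (induction n)
  case 0
  then show ?case by (simp add: prepend_def)
next
  case (Suc n)
  let ?e = "z (j + int n)"
  have edge: "z i \<in> fc_edges Y" and step: "etgt (z i) = esrc (z (i + 1))" for i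
    using assms by (simp_all add: fc_shift_def)
  have "esrc (z (j + int (Suc n))) = etgt ?e"
    using step[of "j + int n"] by (simp add: ac_simps)
  also have "\<dots> = {w. pcons (elabel ?e) w \<in> esrc ?e}"
    by (rule etgt_fc_edge[OF edge])
  also have "prepend (fc_label z) j n (pcons (elabel ?e) w) = prepend (fc_label z) j (Suc n) w" for w
    by (auto simp: prepend_def pcons_def fc_label_def fun_eq_iff less_Suc_eq)
  then have "{w. pcons (elabel ?e) w \<in> esrc ?e} = {s. prepend (fc_label z) j (Suc n) s \<in> esrc (z j)}"
    using Suc by simp
  finally show ?case .
qed

lemma splice_in_fc_shift:
  assumes "u \<in> fc_shift Y" and "v \<in> fc_shift Y" and "esrc (u a) = esrc (v a)"
  shows "(\<lambda>i. if i < a then u i else v i) \<in> fc_shift Y"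
proof -
  have "etgt (u i) = esrc (if i + 1 < a then u (i + 1) else v (i + 1))" if "i < a" for i
  proof (cases "i + 1 < a")
    case False
    with that have "i + 1 = a" by simp
    with assms show ?thesis unfolding fc_shift_def by auto
  qed (use assms in \<open>auto simp: fc_shift_def\<close>)
  with assms show ?thesis unfolding fc_shift_def by auto
qed

lemma cylinder_subset_mball:
  assumes "Metric_space S d"
    and "Metric_space.mtopology S d = subtopology edge_prod_topology S"
    and "q \<in> S" and "e > 0"
  obtains M where "\<And>z. z \<in> S \<Longrightarrow> (\<And>k. \<bar>k\<bar> \<le> M \<Longrightarrow> z k = q k) \<Longrightarrow> d q z < e"
proof -
  interpret Metric_space S d by fact
  have "openin (subtopology edge_prod_topology S) (mball q e)"
    using assms(2) openin_mball by metis
  then obtain T where T: "openin edge_prod_topology T" "mball q e = T \<inter> S"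
    unfolding openin_subtopology by blast
  with assms have "q \<in> T" by auto
  then obtain U where U: "finite {i. U i \<noteq> UNIV}" "q \<in> Pi\<^sub>E UNIV U" "Pi\<^sub>E UNIV U \<subseteq> T"
    using T(1) unfolding edge_prod_topology_def openin_product_topology_alt by auto
  define M where "M = Max (insert 0 (abs ` {i. U i \<noteq> UNIV}))"
  have "d q z < e" if "z \<in> S" and agree: "\<And>k. \<bar>k\<bar> \<le> M \<Longrightarrow> z k = q k" for z
  proof -
    have "z i \<in> U i" for i
    proof (cases "U i = UNIV")
      case False
      then have "\<bar>i\<bar> \<le> M" using U(1) unfolding M_def by simp
      with U(2) show ?thesis using agree by (auto simp: PiE_iff)
    qed simp
    then have "z \<in> mball q e" using U(3) T(2) \<open>z \<in> S\<close> by (auto simp: PiE_iff)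
    then show ?thesis by simp
  qed
  then show thesis using that by blast
qed

lemma tendsto_dist_shiftz_periodic:
  assumes metric: "Metric_space S d"
    and topology: "Metric_space.mtopology S d = subtopology edge_prod_topology S"
    and shift_invariant: "\<And>i z. z \<in> S \<Longrightarrow> shiftz i z \<in> S"
    and "q \<in> S" and "P > 0" and period: "shiftz P q = q"
    and "z \<in> S" and agree: "\<And>j. j < a \<Longrightarrow> z j = q j"
  shows "((\<lambda>i. d (shiftz i z) (shiftz i q)) \<longlongrightarrow> 0) at_bot"
  unfolding tendsto_iff eventually_at_bot_linorder
proof (intro allI impI)
  fix e :: real
  assume "e > 0"
  have "\<exists>M. \<forall>z\<in>S. (\<forall>k. \<bar>k\<bar> \<le> M \<longrightarrow> z k = shiftz r q k) \<longrightarrow> d (shiftz r q) z < e" for r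
    using cylinder_subset_mball[OF metric topology shift_invariant[OF \<open>q \<in> S\<close>] \<open>e > 0\<close>]
    by metis
  then obtain M where M: "\<And>r z. z \<in> S \<Longrightarrow> (\<forall>k. \<bar>k\<bar> \<le> M r \<longrightarrow> z k = shiftz r q k) \<Longrightarrow>
      d (shiftz r q) z < e"
    by metis
  define M0 where "M0 = Max (M ` {0..<P})"
  have "d (shiftz i z) (shiftz i q) < e" if "i \<le> a - M0 - 1" for i
  proof -
    define r where "r = i mod P"
    have "r \<in> {0..<P}" using \<open>P > 0\<close> unfolding r_def by simp
    then have "M r \<le> M0" unfolding M0_def by simp
    have shift_q: "shiftz i q = shiftz r q"
      using shiftz_mod_period[OF period] unfolding r_def by simp
    have "shiftz i z k = shiftz r q k" if "\<bar>k\<bar> \<le> M r" for k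
    proof -
      have "k + i < a" using that \<open>M r \<le> M0\<close> \<open>i \<le> a - M0 - 1\<close> by linarith
      then have "shiftz i z k = shiftz i q k" using agree by (simp add: shiftz_def)
      then show ?thesis using shift_q by simp
    qed
    then have "d (shiftz r q) (shiftz i z) < e"
      using M shift_invariant[OF \<open>z \<in> S\<close>] by blast
    then show ?thesis
      using Metric_space.commute[OF metric] shift_q by simp
  qed
  then show "\<exists>N. \<forall>i\<le>N. dist (d (shiftz i z) (shiftz i q)) 0 < e"
    by (auto simp: Metric_space.nonneg[OF metric] intro!: exI[of _ "a - M0 - 1"])
qed

locale sofic_graph =
  fixes E :: "nat set" and src tgt :: "nat \<Rightarrow> nat" and lab :: "nat \<Rightarrow> 'a"
    and Y :: "(int \<Rightarrow> 'a) set"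
  assumes finite_E: "finite E"
    and Y_eq: "Y = {(\<lambda>i. lab (p i)) | p. \<forall>i. p i \<in> E \<and> tgt (p i) = src (p (i + 1))}"
begin

definition path :: "(int \<Rightarrow> nat) \<Rightarrow> bool" where
  "path p \<longleftrightarrow> (\<forall>i. p i \<in> E \<and> tgt (p i) = src (p (i + 1)))"

lemma mem_Y_iff: "y \<in> Y \<longleftrightarrow> (\<exists>p. path p \<and> y = (\<lambda>i. lab (p i)))"
  unfolding Y_eq path_def by blast

lemma path_shift: "path p \<Longrightarrow> path (\<lambda>k. p (k + i))"
  unfolding path_def by (metis add.commute add.left_commute)

lemma shiftz_in_Y: "y \<in> Y \<Longrightarrow> shiftz i y \<in> Y"
  unfolding mem_Y_iff shiftz_def using path_shift by fastforce

lemma shiftz_in_Y_iff [simp]: "shiftz i y \<in> Y \<longleftrightarrow> y \<in> Y"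
  using shiftz_in_Y[of "shiftz i y" "- i"] shiftz_in_Y[of y i] by auto

lemma path_glue:
  assumes "path p1" and "path p2" and "src (p1 0) = src (p2 0)"
  shows "path (\<lambda>k. if k < 0 then p1 k else p2 k)"
  unfolding path_def
proof
  fix i :: int
  consider "i + 1 < 0" | "i = - 1" | "i \<ge> 0" by linarith
  then show "(if i < 0 then p1 i else p2 i) \<in> E \<and>
      tgt (if i < 0 then p1 i else p2 i) = src (if i + 1 < 0 then p1 (i + 1) else p2 (i + 1))"
    by cases (use assms in \<open>auto simp: path_def\<close>)
qed

lemma path_periodize:
  assumes "path p" and "c < a" and "p a = p c"
  shows "path (periodize p c a)"
  unfolding path_def periodize_def
proof
  fix k
  define r where "r = (k - c) mod (a - c)"
  have r: "0 \<le> r" "r < a - c" unfolding r_def using assms(2) by auto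
  have "(k + 1 - c) mod (a - c) = (r + 1) mod (a - c)"
    unfolding r_def by (simp add: mod_simps algebra_simps)
  also have "\<dots> = (if r + 1 < a - c then r + 1 else 0)"
  proof (cases "r + 1 < a - c")
    case False
    with r have "r + 1 = a - c" by simp
    then show ?thesis by simp
  qed (use r in \<open>simp add: mod_pos_pos_trivial\<close>)
  finally have next_r: "(k + 1 - c) mod (a - c) = (if r + 1 < a - c then r + 1 else 0)" .
  have "p (c + r + 1) = p (c + (k + 1 - c) mod (a - c))"
  proof (cases "r + 1 < a - c")
    case False
    with r have "c + r + 1 = a" by simp
    with next_r False \<open>p a = p c\<close> show ?thesis by simp
  qed (use next_r in \<open>simp add: add.assoc\<close>)
  then show "p (c + r) \<in> E \<and> tgt (p (c + r)) = src (p (c + (k + 1 - c) mod (a - c)))"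
    using \<open>path p\<close> unfolding path_def by metis
qed

lemma closedin_paths: "closedin (product_topology (\<lambda>_::int. discrete_topology E) UNIV) {p. path p}"
proof -
  let ?T = "product_topology (\<lambda>_::int. discrete_topology E) UNIV"
  let ?R = "{(e, e'). e \<in> E \<and> e' \<in> E \<and> tgt e = src e'}"
  have coordinate: "continuous_map ?T (discrete_topology E) (\<lambda>p. p k)" for k
    by (rule continuous_map_product_projection) simp
  have "closedin (prod_topology (discrete_topology E) (discrete_topology E)) ?R"
    by (auto simp flip: prod_topology_discrete_topology)
  then have "closedin ?T {p \<in> topspace ?T. (p i, p (i + 1)) \<in> ?R}" for i
    by (rule closedin_continuous_map_preimage[OF continuous_map_pairedI[OF coordinate coordinate]])
  moreover have "{p. path p} = (\<Inter>i. {p \<in> topspace ?T. (p i, p (i + 1)) \<in> ?R})"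
    by (auto simp: path_def)
  ultimately show ?thesis by auto
qed

lemma windows_in_Y_imp_in_Y:
  assumes "\<And>m::nat. \<exists>t\<in>Y. \<forall>k. \<bar>k\<bar> \<le> int m \<longrightarrow> t k = z k"
  shows "z \<in> Y"
proof -
  let ?T = "product_topology (\<lambda>_::int. discrete_topology E) UNIV"
  define C where "C m = {p. path p \<and> (\<forall>k. \<bar>k\<bar> \<le> int m \<longrightarrow> lab (p k) = z k)}" for m :: nat
  have window: "closedin ?T {p \<in> topspace ?T. p k \<in> {e \<in> E. lab e = z k}}" for k
    by (rule closedin_continuous_map_preimage[OF continuous_map_product_projection]) auto
  have C_eq: "C m = {p. path p} \<inter> (\<Inter>k\<in>{- int m..int m}. {p \<in> topspace ?T. p k \<in> {e \<in> E. lab e = z k}})"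
    for m
    by (auto simp: C_def path_def abs_le_iff)
  have "closedin ?T (C m)" for m
    unfolding C_eq by (intro closedin_Int closedin_paths closedin_INT window) auto
  moreover have "C m \<noteq> {}" for m
    using assms[of m] unfolding C_def by (fastforce simp: mem_Y_iff)
  moreover have "decseq C"
    unfolding decseq_def C_def by auto
  moreover have "compact_space ?T"
    using finite_E by (simp add: compact_space_product_topology compact_space_discrete_topology)
  ultimately have "(\<Inter>m. C m) \<noteq> {}"
    using compact_space_imp_nest by blast
  then obtain p where "p \<in> C m" for m by blast
  then have "path p" and "lab (p k) = z k" for k
    using \<open>p \<in> C (nat \<bar>k\<bar>)\<close> unfolding C_def by auto
  then show ?thesis
    unfolding mem_Y_iff by auto
qed

lemma future_prepend:
  "future Y (shiftz (j + int n) y) = {s. prepend y j n s \<in> future Y (shiftz j y)}"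
  unfolding future_iff_glue by (simp add: glue_prepend)

lemma future_step: "future Y (shiftz (j + 1) y) = {w. pcons (y j) w \<in> future Y (shiftz j y)}"
proof -
  have "prepend y j 1 s = pcons (y j) s" for s
    by (auto simp: prepend_def pcons_def)
  then show ?thesis using future_prepend[of j 1 y] by simp
qed

lemma future_cong_past:
  "(\<And>k. k < j \<Longrightarrow> y k = y' k) \<Longrightarrow> future Y (shiftz j y) = future Y (shiftz j y')"
  unfolding future_iff_glue by (auto simp: glue_def shiftz_def cong: if_cong)

lemma etgt_alpha [simp]: "etgt (alpha Y y j) = future Y (shiftz (j + 1) y)"
  by (simp add: alpha_def etgt_def future_step)

lemma alpha_in_fc_shift:
  assumes "y \<in> Y"
  shows "alpha Y y \<in> fc_shift Y"
proof -
  have "alpha Y y i = (future Y (shiftz i y), y i, future Y (shiftz (i + 1) y))" for i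
    by (simp add: alpha_def future_step)
  moreover have "future Y (shiftz i y) \<in> fc_vertices Y" for i
    using assms unfolding fc_vertices_def by simp
  ultimately have "alpha Y y i \<in> fc_edges Y" for i
    using future_step[of i y] unfolding fc_edges_def by blast
  then show ?thesis
    unfolding fc_shift_def by simp
qed

definition arrival_vertices :: "(int \<Rightarrow> 'a) \<Rightarrow> nat \<Rightarrow> nat set" where
  "arrival_vertices t m =
     {src (p 0) | p. path p \<and> (\<forall>k. - int m \<le> k \<and> k < 0 \<longrightarrow> lab (p k) = t k)}"

definition rays_from :: "nat set \<Rightarrow> (nat \<Rightarrow> 'a) set" where
  "rays_from V = {(\<lambda>n. lab (p (int n))) | p. path p \<and> src (p 0) \<in> V}"

lemma arrival_vertices_subset: "arrival_vertices t m \<subseteq> src ` E"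
  unfolding arrival_vertices_def path_def by auto

lemma arrival_vertices_cong:
  assumes "\<And>k. - int m \<le> k \<Longrightarrow> k < 0 \<Longrightarrow> t' k = t k"
  shows "arrival_vertices t' m = arrival_vertices t m"
proof -
  have "(\<forall>k. - int m \<le> k \<and> k < 0 \<longrightarrow> lab (p k) = t' k) \<longleftrightarrow>
      (\<forall>k. - int m \<le> k \<and> k < 0 \<longrightarrow> lab (p k) = t k)" for p
    using assms by auto
  then show ?thesis unfolding arrival_vertices_def by simp
qed

lemma future_subset_rays_from: "future Y t \<subseteq> rays_from (arrival_vertices t m)"
proof
  fix s
  assume "s \<in> future Y t"
  then obtain p where "path p" and p: "glue t s = (\<lambda>i. lab (p i))"
    unfolding future_iff_glue mem_Y_iff by auto
  have "lab (p k) = t k" if "k < 0" for k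
    using fun_cong[OF p, of k] that by (simp add: glue_def)
  then have "src (p 0) \<in> arrival_vertices t m"
    unfolding arrival_vertices_def using \<open>path p\<close> by blast
  moreover have "s = (\<lambda>n. lab (p (int n)))"
    using p by (auto simp: glue_def fun_eq_iff dest: spec[of _ "int _"])
  ultimately show "s \<in> rays_from (arrival_vertices t m)"
    unfolding rays_from_def using \<open>path p\<close> by blast
qed

lemma rays_from_subset_future:
  assumes reachable: "\<And>m. V \<subseteq> arrival_vertices t m"
  shows "rays_from V \<subseteq> future Y t"
proof
  fix s
  assume "s \<in> rays_from V"
  then obtain p2 where "path p2" and s: "s = (\<lambda>n. lab (p2 (int n)))" and "src (p2 0) \<in> V"
    unfolding rays_from_def by blast
  have "glue t s \<in> Y"
  proof (rule windows_in_Y_imp_in_Y)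
    fix m
    have "src (p2 0) \<in> arrival_vertices t m"
      using reachable \<open>src (p2 0) \<in> V\<close> by blast
    then obtain p1 where "path p1" and p1: "\<forall>k. - int m \<le> k \<and> k < 0 \<longrightarrow> lab (p1 k) = t k"
      and "src (p1 0) = src (p2 0)"
      unfolding arrival_vertices_def by auto
    define q where "q = (\<lambda>k. if k < 0 then p1 k else p2 k)"
    have "(\<lambda>k. lab (q k)) \<in> Y"
      unfolding q_def mem_Y_iff
      using path_glue[OF \<open>path p1\<close> \<open>path p2\<close> \<open>src (p1 0) = src (p2 0)\<close>] by blast
    moreover have "lab (q k) = glue t s k" if "\<bar>k\<bar> \<le> int m" for k
      using that p1 s by (auto simp: q_def glue_def)
    ultimately show "\<exists>t'\<in>Y. \<forall>k. \<bar>k\<bar> \<le> int m \<longrightarrow> t' k = glue t s k"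
      by (intro bexI[of _ "\<lambda>k. lab (q k)"]) auto
  qed
  then show "s \<in> future Y t"
    by (simp add: future_iff_glue)
qed

lemma future_eq_rays_from:
  obtains m0 where "future Y t = rays_from (arrival_vertices t m0)"
proof -
  have "range (arrival_vertices t) \<subseteq> Pow (src ` E)"
    using arrival_vertices_subset by blast
  then have "finite (range (arrival_vertices t))"
    using finite_E by (simp add: finite_subset)
  moreover have "decseq (arrival_vertices t)"
    unfolding decseq_def arrival_vertices_def by fastforce
  ultimately obtain m0 where "\<And>m. arrival_vertices t m0 \<subseteq> arrival_vertices t m"
    using decseq_finite_range_has_least by blast
  then have "future Y t = rays_from (arrival_vertices t m0)"
    using future_subset_rays_from[of t m0] by (intro subset_antisym rays_from_subset_future)
  then show thesis by (rule that)
qed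

lemma finite_futures: "finite (range (future Y))"
proof (rule finite_subset)
  show "range (future Y) \<subseteq> rays_from ` Pow (src ` E)"
  proof
    fix F
    assume "F \<in> range (future Y)"
    then obtain t where "F = future Y t" by blast
    moreover obtain m where "future Y t = rays_from (arrival_vertices t m)"
      by (rule future_eq_rays_from)
    ultimately show "F \<in> rays_from ` Pow (src ` E)"
      using arrival_vertices_subset by blast
  qed
  show "finite (rays_from ` Pow (src ` E))"
    using finite_E by simp
qed

lemma future_window:
  obtains m where "\<And>t'. (\<And>k. - int m \<le> k \<Longrightarrow> k < 0 \<Longrightarrow> t' k = t k) \<Longrightarrow> future Y t' \<subseteq> future Y t"
proof -
  obtain m where m: "future Y t = rays_from (arrival_vertices t m)"
    by (rule future_eq_rays_from)
  have "future Y t' \<subseteq> future Y t" if "\<And>k. - int m \<le> k \<Longrightarrow> k < 0 \<Longrightarrow> t' k = t k" for t'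
    using future_subset_rays_from[of t' m] arrival_vertices_cong[OF that] m by simp
  then show thesis by (rule that)
qed

lemma fc_label_in_Y:
  assumes "z \<in> fc_shift Y"
  shows "fc_label z \<in> Y"
proof (rule windows_in_Y_imp_in_Y)
  fix m :: nat
  have vertex: "esrc (z j) \<in> fc_vertices Y" for j
    using assms unfolding fc_shift_def by (blast intro: esrc_in_fc_vertices)
  obtain y where "y \<in> Y" and y: "esrc (z (- int m)) = future Y y"
    using vertex[of "- int m"] unfolding fc_vertices_def by auto
  obtain s where s: "s \<in> esrc (z (- int m + int (2 * m + 1)))"
    using fc_vertex_nonempty[OF vertex] .
  let ?t = "shiftz (int m) (glue y (prepend (fc_label z) (- int m) (2 * m + 1) s))"
  have "prepend (fc_label z) (- int m) (2 * m + 1) s \<in> future Y y"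
    using s y esrc_prepend[OF assms, of "- int m" "2 * m + 1"] by blast
  then have "?t \<in> Y"
    by (simp add: future_iff_glue)
  moreover have "?t k = fc_label z k" if "\<bar>k\<bar> \<le> int m" for k
  proof -
    have "?t k = prepend (fc_label z) (- int m) (2 * m + 1) s (nat (k + int m))"
      using that by (simp add: shiftz_def glue_def abs_le_iff)
    moreover have "nat (k + int m) < 2 * m + 1" and "- int m + int (nat (k + int m)) = k"
      using that by linarith+
    ultimately show ?thesis
      by (simp add: prepend_def)
  qed
  ultimately show "\<exists>t\<in>Y. \<forall>k. \<bar>k\<bar> \<le> int m \<longrightarrow> t k = fc_label z k"
    by blast
qed

lemma left_asymptotic_alpha_imp_regular:
  assumes "p \<in> Y" and "x \<in> fc_shift Y" and agree: "\<And>j. j < a \<Longrightarrow> x j = alpha Y p j"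
  shows "x \<in> regular_rays Y"
proof -
  have "fc_label z \<in> left_class Y (fc_label x)" if z: "z \<in> left_class (fc_shift Y) x" for z
  proof -
    obtain N where "z \<in> fc_shift Y" and "\<forall>i\<le>N. z i = x i"
      using z unfolding left_class_def by auto
    then have "fc_label z \<in> Y" and "\<forall>i\<le>N. fc_label z i = fc_label x i"
      by (simp_all add: fc_label_in_Y) (simp add: fc_label_def)
    then show ?thesis
      unfolding left_class_def by blast
  qed
  moreover have "y \<in> fc_label ` left_class (fc_shift Y) x" if y: "y \<in> left_class Y (fc_label x)" for y
  proof -
    obtain N where "y \<in> Y" and y: "\<And>i. i \<le> N \<Longrightarrow> y i = fc_label x i"
      using y unfolding left_class_def by auto
    define K where "K = min N (a - 1)"
    have y_p: "y i = p i" if "i \<le> K" for i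
      using y agree that by (simp add: K_def fc_label_def)
    have "alpha Y y i = x i" if "i \<le> K" for i
      using that y_p future_cong_past[of i y p] agree[of i] by (simp add: alpha_def K_def)
    then have "alpha Y y \<in> left_class (fc_shift Y) x"
      using alpha_in_fc_shift[OF \<open>y \<in> Y\<close>] unfolding left_class_def by blast
    then show ?thesis
      using fc_label_alpha by (metis image_eqI)
  qed
  ultimately show ?thesis
    using assms(2) unfolding regular_rays_def by blast
qed

lemma future_subset_future_periodic:
  assumes "n > 0" and period: "shiftz (int n) q = q"
    and invariant: "\<And>s. s \<in> future Y t \<Longrightarrow> prepend q 0 n s \<in> future Y t"
  shows "future Y t \<subseteq> future Y q"
proof
  fix s
  assume "s \<in> future Y t"
  have "glue q s \<in> Y"
  proof (rule windows_in_Y_imp_in_Y)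
    fix m :: nat
    define u where "u = (prepend q 0 n ^^ m) s"
    have "u \<in> future Y t"
      unfolding u_def by (induction m) (use \<open>s \<in> future Y t\<close> invariant in auto)
    then have "shiftz (int (m * n)) (glue t u) \<in> Y"
      by (simp add: future_iff_glue)
    moreover have "shiftz (int (m * n)) (glue t u) k = glue q s k" if "\<bar>k\<bar> \<le> int m" for k
    proof -
      have "int m \<le> int (m * n)"
        using \<open>n > 0\<close> by (simp only: of_nat_le_iff) simp
      with that show ?thesis
        unfolding u_def by (intro shiftz_glue_funpow_prepend \<open>n > 0\<close> period) linarith
    qed
    ultimately show "\<exists>t'\<in>Y. \<forall>k. \<bar>k\<bar> \<le> int m \<longrightarrow> t' k = glue q s k"
      by blast
  qed
  then show "s \<in> future Y q"
    by (simp add: future_iff_glue)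
qed

lemma future_periodize:
  assumes "c < a" and same_future: "future Y (shiftz c y) = future Y (shiftz a y)"
    and window: "\<And>t'. (\<And>k. c - a \<le> k \<Longrightarrow> k < 0 \<Longrightarrow> t' k = shiftz a y k) \<Longrightarrow>
      future Y t' \<subseteq> future Y (shiftz a y)"
  shows "future Y (shiftz a (periodize y c a)) = future Y (shiftz a y)"
proof
  let ?p = "periodize y c a"
  show "future Y (shiftz a ?p) \<subseteq> future Y (shiftz a y)"
    by (rule window) (simp add: shiftz_def periodize_eq)
  show "future Y (shiftz a y) \<subseteq> future Y (shiftz a ?p)"
  proof (rule future_subset_future_periodic)
    show "nat (a - c) > 0"
      using \<open>c < a\<close> by simp
    have "shiftz (a - c) (shiftz a ?p) = shiftz a (shiftz (a - c) ?p)"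
      by (simp add: add.commute)
    then show "shiftz (int (nat (a - c))) (shiftz a ?p) = shiftz a ?p"
      using \<open>c < a\<close> by (simp only: shiftz_periodize) simp
    fix s
    assume "s \<in> future Y (shiftz a y)"
    moreover have "future Y (shiftz a y) = {s. prepend y c (nat (a - c)) s \<in> future Y (shiftz c y)}"
      using future_prepend[of c "nat (a - c)" y] \<open>c < a\<close> by simp
    ultimately have "prepend y c (nat (a - c)) s \<in> future Y (shiftz a y)"
      using same_future by blast
    moreover have "shiftz a ?p (int i) = y (c + int i)" if "i < nat (a - c)" for i
    proof -
      have "shiftz a ?p (int i) = shiftz (a - c) ?p (c + int i)"
        by (simp add: shiftz_def algebra_simps)
      also have "\<dots> = y (c + int i)"
        using that by (simp only: shiftz_periodize) (simp add: periodize_eq)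
      finally show ?thesis .
    qed
    then have "prepend (shiftz a ?p) 0 (nat (a - c)) s = prepend y c (nat (a - c)) s"
      by (simp add: prepend_def fun_eq_iff)
    ultimately show "prepend (shiftz a ?p) 0 (nat (a - c)) s \<in> future Y (shiftz a y)"
      by simp
  qed
qed

lemma periodic_point_sharing_future:
  assumes "y \<in> Y"
  obtains p P a where "p \<in> Y" and "P > 0" and "shiftz P p = p" and "a \<le> N"
    and "future Y (shiftz a p) = future Y (shiftz a y)"
proof -
  obtain \<pi> where "path \<pi>" and y: "y = (\<lambda>i. lab (\<pi> i))"
    using assms mem_Y_iff by auto
  define f where "f j = (future Y (shiftz j y), \<pi> j)" for j
  have "f ` {..N} \<subseteq> range (future Y) \<times> E"
    using \<open>path \<pi>\<close> unfolding path_def f_def by auto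
  then have "finite (f ` {..N})"
    using finite_subset finite_cartesian_product[OF finite_futures finite_E] by blast
  then obtain a where "a \<le> N" and recurs: "\<forall>m. \<exists>c. c < a - m \<and> f c = f a"
    by (rule int_pigeonhole_far_below)
  obtain m where window: "\<And>t'. (\<And>k. - int m \<le> k \<Longrightarrow> k < 0 \<Longrightarrow> t' k = shiftz a y k) \<Longrightarrow>
      future Y t' \<subseteq> future Y (shiftz a y)"
    using future_window[of "shiftz a y"] by blast
  obtain c where "c < a - int m" and "f c = f a"
    using recurs by blast
  then have "future Y (shiftz c y) = future Y (shiftz a y)" and "\<pi> c = \<pi> a"
    by (simp_all add: f_def)
  moreover have "future Y t' \<subseteq> future Y (shiftz a y)"
    if "\<And>k. c - a \<le> k \<Longrightarrow> k < 0 \<Longrightarrow> t' k = shiftz a y k" for t'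
    using that \<open>c < a - int m\<close> by (intro window) auto
  ultimately have same_future: "future Y (shiftz a (periodize y c a)) = future Y (shiftz a y)"
    using \<open>c < a - int m\<close> by (intro future_periodize) auto
  have "path (periodize \<pi> c a)"
    using \<open>path \<pi>\<close> \<open>c < a - int m\<close> \<open>\<pi> c = \<pi> a\<close> by (intro path_periodize) auto
  moreover have "periodize y c a = (\<lambda>k. lab (periodize \<pi> c a k))"
    by (simp add: periodize_def y)
  ultimately have "periodize y c a \<in> Y"
    unfolding mem_Y_iff by blast
  moreover have "a - c > 0"
    using \<open>c < a - int m\<close> by simp
  ultimately show thesis
    using that same_future shiftz_periodize \<open>a \<le> N\<close> by blast
qed

lemma exists_ray_left_asymptotic_to_periodic:
  assumes "x \<in> fc_shift Y"
  obtains p P a x' where "p \<in> Y" and "P > 0" and "shiftz P p = p" and "x' \<in> fc_shift Y"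
    and "\<forall>i\<ge>N. x' i = x i" and "\<forall>j<a. x' j = alpha Y p j"
proof -
  have "esrc (x N) \<in> fc_vertices Y"
    using assms unfolding fc_shift_def by (blast intro: esrc_in_fc_vertices)
  then obtain y0 where "y0 \<in> Y" and y0: "esrc (x N) = future Y y0"
    unfolding fc_vertices_def by auto
  define y where "y = shiftz (- N) y0"
  have "y \<in> Y" and y_N: "future Y (shiftz N y) = esrc (x N)"
    using \<open>y0 \<in> Y\<close> y0 by (simp_all add: y_def)
  obtain p P a where "p \<in> Y" "P > 0" "shiftz P p = p" "a \<le> N"
    and same_future: "future Y (shiftz a p) = future Y (shiftz a y)"
    using periodic_point_sharing_future[OF \<open>y \<in> Y\<close>] .
  define v where "v = (\<lambda>i. if i < N then alpha Y y i else x i)"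
  have "v \<in> fc_shift Y"
    unfolding v_def
    by (intro splice_in_fc_shift alpha_in_fc_shift \<open>y \<in> Y\<close> assms) (simp add: y_N)
  have "esrc (v a) = future Y (shiftz a y)"
    using \<open>a \<le> N\<close> y_N by (auto simp: v_def)
  define x' where "x' = (\<lambda>i. if i < a then alpha Y p i else v i)"
  have "x' \<in> fc_shift Y"
    unfolding x'_def
    by (intro splice_in_fc_shift alpha_in_fc_shift \<open>p \<in> Y\<close> \<open>v \<in> fc_shift Y\<close>)
      (simp add: same_future \<open>esrc (v a) = future Y (shiftz a y)\<close>)
  moreover have "\<forall>i\<ge>N. x' i = x i"
    using \<open>a \<le> N\<close> by (simp add: x'_def v_def)
  moreover have "\<forall>j<a. x' j = alpha Y p j"
    by (simp add: x'_def)
  ultimately show thesis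
    using \<open>p \<in> Y\<close> \<open>P > 0\<close> \<open>shiftz P p = p\<close> that by blast
qed

end

theorem lemma2p16:
  fixes Y :: "(int \<Rightarrow> 'a::finite) set"
    and d :: "(int \<Rightarrow> 'a fedge) \<Rightarrow> (int \<Rightarrow> 'a fedge) \<Rightarrow> real"
    and x :: "int \<Rightarrow> 'a fedge"
    and N :: int
  assumes "sofic Y"
    and "Metric_space (fc_shift Y) d"
    and "Metric_space.mtopology (fc_shift Y) d = subtopology edge_prod_topology (fc_shift Y)"
    and "x \<in> fc_shift Y"
  shows "\<exists>p x'. p \<in> Y \<and> periodic_pt p \<and> x' \<in> fc_shift Y \<and> (\<forall>i\<ge>N. x' i = x i) \<and>
           ((\<lambda>i. d (shiftz i x') (shiftz i (alpha Y p))) \<longlongrightarrow> 0) at_bot \<and>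
           x' \<in> regular_rays Y"
proof -
  obtain E :: "nat set" and src tgt :: "nat \<Rightarrow> nat" and lab :: "nat \<Rightarrow> 'a" where
    "finite E" and "Y = {(\<lambda>i. lab (p i)) | p. \<forall>i. p i \<in> E \<and> tgt (p i) = src (p (i + 1))}"
    using assms(1) unfolding sofic_def by blast
  then interpret sofic_graph E src tgt lab Y
    by unfold_locales
  obtain p P a x' where "p \<in> Y" and "P > 0" and period: "shiftz P p = p" and "x' \<in> fc_shift Y"
    and x'_x: "\<forall>i\<ge>N. x' i = x i" and agree: "\<forall>j<a. x' j = alpha Y p j"
    by (rule exists_ray_left_asymptotic_to_periodic[OF assms(4), where N = N])
  have "p (k + P) = p k" for k
    using fun_cong[OF period, of k] by (simp add: shiftz_def)
  with \<open>P > 0\<close> have "periodic_pt p"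
    unfolding periodic_pt_def by blast
  moreover have "shiftz P (alpha Y p) = alpha Y p"
    using period by (simp flip: alpha_shiftz)
  then have "((\<lambda>i. d (shiftz i x') (shiftz i (alpha Y p))) \<longlongrightarrow> 0) at_bot"
    using tendsto_dist_shiftz_periodic[OF assms(2,3)] fc_shift_shiftz alpha_in_fc_shift[OF \<open>p \<in> Y\<close>]
      \<open>P > 0\<close> \<open>x' \<in> fc_shift Y\<close> agree by blast
  moreover have "x' \<in> regular_rays Y"
    using \<open>p \<in> Y\<close> \<open>x' \<in> fc_shift Y\<close> agree[rule_format] by (rule left_asymptotic_alpha_imp_regular)
  ultimately show ?thesis
    using \<open>p \<in> Y\<close> \<open>x' \<in> fc_shift Y\<close> x'_x by blast
qed

end
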